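(* Let $\Gamma=\{\emptyset,A,B,C\}\subseteq\mathbb F_2^\Omega$ be a balanced lift of a commuting four group in the Golay co-code (so $|A|=|B|=|C|=4$ have co-weight $4$, $\bar A+\bar B=\bar C$, and the sextets of $\bar A,\bar B,\bar C$ pairwise commute). Let $\sigma(A,B)\in\{\pm1\}$ be defined by $e_Ae_B1_G=\sigma(A,B)e_C1_G$, and let $\mu:\Gamma\to\{\pm1\}$ be a homomorphism (i.e. $\mu(\emptyset)=1$, $\mu(C)=\mu(A)\mu(B)$). Then $$s=\tfrac12\big(1+\mu(A)e_A+\mu(B)e_B-\sigma(A,B)\mu(C)e_C\big)1_G$$ lies in the $\mathrm{Spin}(\mathfrak l)$-orbit of $1_G$.
   Context: $\Omega$: ordered $24$-set; $\mathcal G$: copy of the extended Golay code on $\Omega$; $\mathcal G^*=\mathbb F_2^\Omega/\mathcal G$ the co-code; co-weight $w^*(X)$ = minimal weight in $X+\mathcal G$. Each co-code element of co-weight $4$ has exactly six weight-$4$ lifts, forming a partition of $\Omega$ into tetrads (a sextet). Two such sextets commute if every tetrad of one meets every tetrad of the other in an even number of points. A balanced lift of $\bar\Delta\subseteq\mathcal G^*$ is $\Delta\subseteq\mathbb F_2^\Omega$ mapping bijectively to $\bar\Delta$ with $w(X)=w^*(X)$; a group law on $\Gamma$ is given by $X\dotplus Y=Z$ iff $X+Y+Z\in\mathcal G$. $\mathfrak l$: $24$-dimensional Euclidean space with orthonormal basis $\{e_i\}_{i\in\Omega}$; $\mathrm{Cl}(\mathfrak l)$ with $uv+vu=-2\langle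 u,v\rangle$; $e_X=e_{x_1}\cdots e_{x_k}$ ($x_1<\dots<x_k$); $G\subset\mathrm{Spin}(\mathfrak l)$ a subgroup with exactly one element $\pm e_D$ per $D\in\mathcal G$, $-1\notin G$, $e_\Omega\in G$; $\mathrm{Cm}(\mathfrak l)_G=\mathrm{Cl}(\mathfrak l)\otimes_{\mathbb RG}\mathbb R_1$, $1_G=1\otimes1$, with $\mathrm{Spin}(\mathfrak l)$ acting by left multiplication. *)

theory Defs
  imports Complex_Main
begin

definition Omega :: "nat set" where "Omega = {..<24}"

text \<open>Elements of F_2^Omega are subsets of Omega; addition is symmetric difference.\<close>
definition symdiff :: "nat set \<Rightarrow> nat set \<Rightarrow> nat set" where
  "symdiff X Y = (X - Y) \<union> (Y - X)"

text \<open>Standard extended Golay code: the extended quadratic residue code of length 24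
  (coordinates 0..22 = Z/23, coordinate 23 = infinity), spanned by the following 12 words
  (it is a [24,12,8] code).\<close>
definition golay_gens :: "nat set list" where
  "golay_gens =
    [{1, 2, 3, 4, 6, 8, 9, 12, 13, 16, 18, 23},
     {2, 3, 4, 5, 7, 9, 10, 13, 14, 17, 19, 23},
     {3, 4, 5, 6, 8, 10, 11, 14, 15, 18, 20, 23},
     {4, 5, 6, 7, 9, 11, 12, 15, 16, 19, 21, 23},
     {5, 6, 7, 8, 10, 12, 13, 16, 17, 20, 22, 23},
     {0, 6, 7, 8, 9, 11, 13, 14, 17, 18, 21, 23},
     {1, 7, 8, 9, 10, 12, 14, 15, 18, 19, 22, 23},
     {0, 2, 8, 9, 10, 11, 13, 15, 16, 19, 20, 23},
     {1, 3, 9, 10, 11, 12, 14, 16, 17, 20, 21, 23},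
     {2, 4, 10, 11, 12, 13, 15, 17, 18, 21, 22, 23},
     {0, 3, 5, 11, 12, 13, 14, 16, 18, 19, 22, 23},
     {0, 1, 4, 6, 12, 13, 14, 15, 17, 19, 20, 23}]"

definition golay_std :: "nat set set" where
  "golay_std = {foldr symdiff (nths golay_gens I) {} | I. I \<subseteq> {..<12}}"

definition golay_copy :: "nat set set \<Rightarrow> bool" where
  "golay_copy Gc \<longleftrightarrow> (\<exists>\<pi>. bij_betw \<pi> Omega Omega \<and> Gc = (\<lambda>D. \<pi> ` D) ` golay_std)"

definition coweight :: "nat set set \<Rightarrow> nat set \<Rightarrow> nat" where
  "coweight Gc X = Min ((\<lambda>D. card (symdiff X D)) ` Gc)"

definition sextet :: "nat set set \<Rightarrow> nat set \<Rightarrow> nat set set" where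
  "sextet Gc X = {T. T \<subseteq> Omega \<and> card T = 4 \<and> symdiff T X \<in> Gc}"

definition sextets_commute :: "nat set set \<Rightarrow> nat set \<Rightarrow> nat set \<Rightarrow> bool" where
  "sextets_commute Gc X Y \<longleftrightarrow>
     (\<forall>T \<in> sextet Gc X. \<forall>T' \<in> sextet Gc Y. even (card (T \<inter> T')))"

text \<open>Gamma = {{}, A, B, C} is a balanced lift of a commuting four group of the co-code:
  A, B, C are lifts with weight equal to co-weight 4, their classes together with 0 form a
  Klein four subgroup (A-bar, B-bar nonzero and distinct, A-bar + B-bar = C-bar), and the
  sextets pairwise commute.\<close>
definition balanced_commuting_four_group ::
  "nat set set \<Rightarrow> nat set \<Rightarrow> nat set \<Rightarrow> nat set \<Rightarrow> bool" where
  "balanced_commuting_four_group Gc A B C \<longleftrightarrow>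
     A \<subseteq> Omega \<and> B \<subseteq> Omega \<and> C \<subseteq> Omega \<and>
     card A = 4 \<and> card B = 4 \<and> card C = 4 \<and>
     coweight Gc A = 4 \<and> coweight Gc B = 4 \<and> coweight Gc C = 4 \<and>
     symdiff A B \<notin> Gc \<and>
     symdiff (symdiff A B) C \<in> Gc \<and>
     sextets_commute Gc A B \<and> sextets_commute Gc A C \<and> sextets_commute Gc B C"

text \<open>An element of Cl(l) is represented by its coordinates w.r.t. the basis e_X, X \<subseteq> Omega
  (coordinates at sets not contained in Omega are zero).\<close>
type_synonym cl = "nat set \<Rightarrow> real"

definition cl_carrier :: "cl set" where
  "cl_carrier = {f. \<forall>X. \<not> X \<subseteq> Omega \<longrightarrow> f X = 0}"

text \<open>e_X e_Y = sign * e_(X+Y), with e_i e_j = - e_j e_i (i \<noteq> j) and e_i e_i = -1,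
  i.e. uv + vu = -2<u,v>.\<close>
definition cl_sign :: "nat set \<Rightarrow> nat set \<Rightarrow> real" where
  "cl_sign X Y = (-1) ^ (card {(x, y). x \<in> X \<and> y \<in> Y \<and> y < x} + card (X \<inter> Y))"

definition cl_mul :: "cl \<Rightarrow> cl \<Rightarrow> cl" where
  "cl_mul f g = (\<lambda>Z. \<Sum>X\<in>Pow Omega. \<Sum>Y\<in>Pow Omega.
      if symdiff X Y = Z then cl_sign X Y * f X * g Y else 0)"

definition cl_add :: "cl \<Rightarrow> cl \<Rightarrow> cl" where "cl_add f g = (\<lambda>Z. f Z + g Z)"
definition cl_smul :: "real \<Rightarrow> cl \<Rightarrow> cl" where "cl_smul c f = (\<lambda>Z. c * f Z)"
definition cl_neg :: "cl \<Rightarrow> cl" where "cl_neg f = (\<lambda>Z. - f Z)"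
definition cl_zero :: cl where "cl_zero = (\<lambda>Z. 0)"

text \<open>Basis element e_X (= e_x1 ... e_xk, x1 < ... < xk); e_{} = 1.\<close>
definition cl_e :: "nat set \<Rightarrow> cl" where "cl_e X = (\<lambda>Z. if Z = X then 1 else 0)"

definition cl_one :: cl where "cl_one = cl_e {}"

definition cl_vec :: "(nat \<Rightarrow> real) \<Rightarrow> cl" where
  "cl_vec v = (\<lambda>Z. if Z \<subseteq> Omega \<and> card Z = 1 then v (the_elem Z) else 0)"

definition unit_vecs :: "cl set" where
  "unit_vecs = {cl_vec v | v. (\<Sum>i\<in>Omega. (v i)\<^sup>2) = 1}"

definition Spin :: "cl set" where
  "Spin = {foldr cl_mul us cl_one | us. even (length us) \<and> set us \<subseteq> unit_vecs}"

definition good_G :: "nat set set \<Rightarrow> cl set \<Rightarrow> bool" where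
  "good_G Gc G \<longleftrightarrow>
     G \<subseteq> Spin \<and> cl_one \<in> G \<and>
     (\<forall>a\<in>G. \<forall>b\<in>G. cl_mul a b \<in> G) \<and>
     (\<forall>a\<in>G. \<exists>b\<in>G. cl_mul a b = cl_one) \<and>
     (\<forall>x\<in>G. \<exists>D\<in>Gc. x = cl_e D \<or> x = cl_neg (cl_e D)) \<and>
     (\<forall>D\<in>Gc. (cl_e D \<in> G) \<noteq> (cl_neg (cl_e D) \<in> G)) \<and>
     cl_neg cl_one \<notin> G \<and> cl_e Omega \<in> G"

text \<open>Kernel of Cl(l) \<rightarrow> Cm(l)_G, x \<mapsto> x 1_G: the real span of {x g - x},
  which is already closed under addition/scaling as a set of finite sums.\<close>
inductive_set cm_kernel :: "cl set \<Rightarrow> cl set" for G :: "cl set" where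
  zero: "cl_zero \<in> cm_kernel G"
| step: "\<lbrakk>x \<in> cl_carrier; g \<in> G; n \<in> cm_kernel G\<rbrakk>
           \<Longrightarrow> cl_add (cl_add (cl_mul x g) (cl_neg x)) n \<in> cm_kernel G"

text \<open>x 1_G = y 1_G in Cm(l)_G.\<close>
definition cm_eq :: "cl set \<Rightarrow> cl \<Rightarrow> cl \<Rightarrow> bool" where
  "cm_eq G x y \<longleftrightarrow> cl_add x (cl_neg y) \<in> cm_kernel G"

definition in_spin_orbit :: "cl set \<Rightarrow> cl \<Rightarrow> bool" where
  "in_spin_orbit G x \<longleftrightarrow> (\<exists>g\<in>Spin. cm_eq G (cl_mul g cl_one) x)"

end

theory Submission
  imports Defs
begin

text \<open>Choose a tetrad B' of the sextet of B that meets A in two points; commutation of the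
  sextets forces A \<union> B' into an octad D = {i1, j1, ..., i4, j4} with A = {i1, j1, i2, j2} and
  B' = {i1, j1, i3, j3}. The bivectors x_k = \<plusminus>e_i_k e_j_k commute pairwise and square to -1, so
  each (1 + x_k)/sqrt 2 is a product of two unit vectors and g = \<Prod>_k (1 + x_k)/sqrt 2 lies in
  Spin. With signs chosen so that x1 x2 x3 x4 is the element \<plusminus>e_D of G, which fixes 1_G,
  expanding the product gives g 1_G = 1/2 (1 + x1 x2 + x1 x3 - x1 x2 x1 x3) 1_G, where
  x1 x2 = \<mu>(A) e_A and x1 x3 = \<plusminus>\<mu>(B) e_B'. Finally e_B 1_G = \<plusminus>e_B' 1_G because B + B' is a
  Golay word, and e_C 1_G = \<sigma> e_A e_B 1_G.

  The facts about octads come from the weight distribution of the Golay code (one word of weight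
  below 8 and 759 of weight 8), obtained by evaluation; a double count then shows that every
  5-set lies in an octad.\<close>

lemma symdiff_commute: "symdiff X Y = symdiff Y X"
  by (auto simp: symdiff_def)

lemma symdiff_self [simp]: "symdiff X X = {}"
  by (auto simp: symdiff_def)

lemma symdiff_empty [simp]: "symdiff X {} = X" "symdiff {} X = X"
  by (auto simp: symdiff_def)

lemma symdiff_cancel_left [simp]: "symdiff X (symdiff X Y) = Y"
  by (auto simp: symdiff_def)

lemma symdiff_eq_iff: "symdiff X Y = Z \<longleftrightarrow> Y = symdiff X Z"
  by (auto simp: symdiff_def)

lemma symdiff_subset_Omega_iff: "X \<subseteq> Omega \<Longrightarrow> symdiff X Z \<subseteq> Omega \<longleftrightarrow> Z \<subseteq> Omega"
  by (auto simp: symdiff_def)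

lemma card_symdiff:
  assumes "finite X" "finite Y"
  shows "card (symdiff X Y) + 2 * card (X \<inter> Y) = card X + card Y"
proof -
  have "symdiff X Y = (X \<union> Y) - (X \<inter> Y)" by (auto simp: symdiff_def)
  then have "card (symdiff X Y) = card (X \<union> Y) - card (X \<inter> Y)"
    using assms by (simp add: card_Diff_subset[of "X \<inter> Y" "X \<union> Y"] Int_Un_eq(3) inf.coboundedI1)
  moreover have "card X + card Y = card (X \<union> Y) + card (X \<inter> Y)" using assms by (rule card_Un_Int)
  moreover have "card (X \<inter> Y) \<le> card (X \<union> Y)" using assms by (intro card_mono) auto
  ultimately show ?thesis by linarith
qed

lemma finite_Omega [simp]: "finite Omega"
  by (simp add: Omega_def)

lemma finite_subset_Omega: "X \<subseteq> Omega \<Longrightarrow> finite X"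
  using finite_subset finite_Omega by blast

definition cl_sign_elem :: "nat \<Rightarrow> nat \<Rightarrow> real" where
  "cl_sign_elem x y = (if y < x then -1 else 1) * (if x = y then -1 else 1)"

lemma cl_sign_elem_sq: "cl_sign_elem x y * cl_sign_elem x y = 1"
  by (simp add: cl_sign_elem_def)

lemma prod_if_neg_one:
  "finite A \<Longrightarrow> (\<Prod>x\<in>A. if P x then -1 else 1 :: 'a::comm_ring_1) = (-1) ^ card {x\<in>A. P x}"
  by (simp add: prod.If_cases Int_def)

lemma prod_symdiff_involutive:
  fixes f :: "nat \<Rightarrow> 'a::comm_monoid_mult"
  assumes "finite X" "finite Y" "\<And>x. f x * f x = 1"
  shows "prod f (symdiff X Y) = prod f X * prod f Y"
proof -
  have "prod f (X \<inter> Y) * prod f (X \<inter> Y) = 1"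
    by (simp only: prod.distrib[symmetric] assms(3) prod.neutral_const)
  moreover have "prod f (symdiff X Y) = prod f (X - Y) * prod f (Y - X)"
    unfolding symdiff_def using assms by (intro prod.union_disjoint) auto
  moreover have "prod f X * prod f Y = prod f (X \<inter> Y) * prod f (X \<inter> Y) * (prod f (X - Y) * prod f (Y - X))"
    using prod.Int_Diff[OF assms(1), of f Y] prod.Int_Diff[OF assms(2), of f X]
    by (simp add: Int_commute ac_simps)
  ultimately show ?thesis by simp
qed

lemma cl_sign_eq_prod:
  assumes "finite X" "finite Y"
  shows "cl_sign X Y = (\<Prod>x\<in>X. \<Prod>y\<in>Y. cl_sign_elem x y)"
proof -
  have fin: "finite (X \<times> Y)" using assms by simp
  have "card {p \<in> X \<times> Y. fst p = snd p} = card (X \<inter> Y)"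
  proof -
    have "{p \<in> X \<times> Y. fst p = snd p} = (\<lambda>x. (x, x)) ` (X \<inter> Y)" by auto
    then show ?thesis by (simp add: card_image inj_on_def)
  qed
  moreover have "{p \<in> X \<times> Y. snd p < fst p} = {(x, y). x \<in> X \<and> y \<in> Y \<and> y < x}" by auto
  moreover have "(\<Prod>x\<in>X. \<Prod>y\<in>Y. cl_sign_elem x y)
      = (\<Prod>p\<in>X \<times> Y. if snd p < fst p then -1 else 1) * (\<Prod>p\<in>X \<times> Y. if fst p = snd p then -1 else 1)"
    by (simp add: prod.cartesian_product case_prod_beta cl_sign_elem_def prod.distrib)
  ultimately show ?thesis by (simp add: prod_if_neg_one[OF fin] cl_sign_def power_add)
qed

lemma cl_sign_cases: "cl_sign X Y \<in> {1, -1}"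
proof -
  have "(-1 :: real) ^ n \<in> {1, -1}" for n by (cases "even n") simp_all
  then show ?thesis by (simp only: cl_sign_def)
qed

lemma cl_sign_sq: "cl_sign X Y * cl_sign X Y = 1"
  using cl_sign_cases[of X Y] by auto

lemma cl_sign_symdiff_left:
  assumes "finite X" "finite Y" "finite Z"
  shows "cl_sign (symdiff X Y) Z = cl_sign X Z * cl_sign Y Z"
proof -
  have "finite (symdiff X Y)" using assms by (simp add: symdiff_def)
  then show ?thesis
    unfolding cl_sign_eq_prod[OF \<open>finite (symdiff X Y)\<close> assms(3)]
      cl_sign_eq_prod[OF assms(1,3)] cl_sign_eq_prod[OF assms(2,3)]
    using assms by (intro prod_symdiff_involutive) (simp_all add: prod.distrib[symmetric] cl_sign_elem_sq)
qed

lemma cl_sign_symdiff_right: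
  assumes "finite X" "finite Y" "finite Z"
  shows "cl_sign X (symdiff Y Z) = cl_sign X Y * cl_sign X Z"
proof -
  have "finite (symdiff Y Z)" using assms by (simp add: symdiff_def)
  then show ?thesis
    unfolding cl_sign_eq_prod[OF assms(1) \<open>finite (symdiff Y Z)\<close>]
      cl_sign_eq_prod[OF assms(1,2)] cl_sign_eq_prod[OF assms(1,3)]
    by (simp add: prod_symdiff_involutive[OF assms(2,3)] cl_sign_elem_sq prod.distrib)
qed

lemma cl_sign_cocycle:
  assumes "finite X" "finite Y" "finite Z"
  shows "cl_sign X Y * cl_sign (symdiff X Y) Z = cl_sign X (symdiff Y Z) * cl_sign Y Z"
  by (simp add: cl_sign_symdiff_left cl_sign_symdiff_right assms)

lemma cl_sign_empty [simp]: "cl_sign {} Y = 1" "cl_sign X {} = 1"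
  by (simp_all add: cl_sign_def)

lemma cl_sign_singletons: "cl_sign {i} {j} = cl_sign_elem i j"
  by (simp add: cl_sign_eq_prod)

lemma cl_sign_singleton_self: "cl_sign {i} {i} = -1"
  by (simp add: cl_sign_singletons cl_sign_elem_def)

lemma cl_sign_singletons_swap: "i \<noteq> j \<Longrightarrow> cl_sign {j} {i} = - cl_sign {i} {j}"
  by (cases "i < j") (auto simp: cl_sign_singletons cl_sign_elem_def)

section \<open>The Clifford product on coordinates\<close>

lemma cl_mul_apply:
  "cl_mul f g Z = (if Z \<subseteq> Omega
     then \<Sum>X\<in>Pow Omega. cl_sign X (symdiff X Z) * f X * g (symdiff X Z) else 0)"
proof -
  have "(\<Sum>Y\<in>Pow Omega. if symdiff X Y = Z then cl_sign X Y * f X * g Y else 0)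
      = (if Z \<subseteq> Omega then cl_sign X (symdiff X Z) * f X * g (symdiff X Z) else 0)"
    if "X \<in> Pow Omega" for X
  proof -
    have "(\<Sum>Y\<in>Pow Omega. if symdiff X Y = Z then cl_sign X Y * f X * g Y else 0)
        = (\<Sum>Y\<in>Pow Omega. if Y = symdiff X Z then cl_sign X Y * f X * g Y else 0)"
      by (simp add: symdiff_eq_iff)
    then show ?thesis using that by (simp add: symdiff_subset_Omega_iff)
  qed
  then show ?thesis unfolding cl_mul_def by (auto intro: sum.neutral)
qed

lemma cl_mul_carrier [simp]: "cl_mul f g \<in> cl_carrier"
  by (simp add: cl_carrier_def cl_mul_apply)

lemma sum_Pow_Omega_reindex_symdiff:
  "X \<subseteq> Omega \<Longrightarrow> (\<Sum>Z\<in>Pow Omega. F Z) = (\<Sum>Y\<in>Pow Omega. F (symdiff X Y))"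
  by (rule sum.reindex_bij_witness[of _ "symdiff X" "symdiff X"]) (auto simp: symdiff_subset_Omega_iff)

lemma cl_mul_mul_left_apply:
  assumes "W \<subseteq> Omega"
  shows "cl_mul (cl_mul f g) h W = (\<Sum>X\<in>Pow Omega. \<Sum>Y\<in>Pow Omega.
    cl_sign X Y * cl_sign (symdiff X Y) (symdiff (symdiff X Y) W) * f X * g Y * h (symdiff (symdiff X Y) W))"
proof -
  have "cl_mul (cl_mul f g) h W = (\<Sum>Z\<in>Pow Omega. \<Sum>X\<in>Pow Omega.
      cl_sign Z (symdiff Z W) * (cl_sign X (symdiff X Z) * f X * g (symdiff X Z)) * h (symdiff Z W))"
    using assms by (simp add: cl_mul_apply[of "cl_mul f g"] cl_mul_apply[of f g] sum_distrib_left sum_distrib_right)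
  also have "\<dots> = (\<Sum>X\<in>Pow Omega. \<Sum>Z\<in>Pow Omega.
      cl_sign Z (symdiff Z W) * (cl_sign X (symdiff X Z) * f X * g (symdiff X Z)) * h (symdiff Z W))"
    by (rule sum.swap)
  also have "\<dots> = (\<Sum>X\<in>Pow Omega. \<Sum>Y\<in>Pow Omega.
      cl_sign X Y * cl_sign (symdiff X Y) (symdiff (symdiff X Y) W) * f X * g Y * h (symdiff (symdiff X Y) W))"
  proof (rule sum.cong[OF refl])
    fix X assume "X \<in> Pow Omega"
    then show "(\<Sum>Z\<in>Pow Omega. cl_sign Z (symdiff Z W) * (cl_sign X (symdiff X Z) * f X * g (symdiff X Z)) * h (symdiff Z W))
      = (\<Sum>Y\<in>Pow Omega. cl_sign X Y * cl_sign (symdiff X Y) (symdiff (symdiff X Y) W) * f X * g Y * h (symdiff (symdiff X Y) W))"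
      by (subst sum_Pow_Omega_reindex_symdiff[of X]) (simp_all add: ac_simps)
  qed
  finally show ?thesis .
qed

lemma cl_mul_mul_right_apply:
  assumes "W \<subseteq> Omega"
  shows "cl_mul f (cl_mul g h) W = (\<Sum>X\<in>Pow Omega. \<Sum>Y\<in>Pow Omega.
    cl_sign X (symdiff X W) * cl_sign Y (symdiff Y (symdiff X W)) * f X * g Y * h (symdiff Y (symdiff X W)))"
proof -
  have "symdiff X W \<subseteq> Omega" if "X \<in> Pow Omega" for X
    using that assms by (simp add: symdiff_subset_Omega_iff)
  then show ?thesis
    using assms by (auto simp: cl_mul_apply[of f] cl_mul_apply[of g h] sum_distrib_left ac_simps intro!: sum.cong)
qed

lemma cl_mul_assoc: "cl_mul (cl_mul f g) h = cl_mul f (cl_mul g h)"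
proof
  fix W
  show "cl_mul (cl_mul f g) h W = cl_mul f (cl_mul g h) W"
  proof (cases "W \<subseteq> Omega")
    case True
    have "cl_sign X Y * cl_sign (symdiff X Y) (symdiff (symdiff X Y) W)
        = cl_sign X (symdiff X W) * cl_sign Y (symdiff Y (symdiff X W))"
      if "X \<subseteq> Omega" "Y \<subseteq> Omega" for X Y
    proof -
      define Y' where "Y' = symdiff (symdiff X Y) W"
      have "symdiff Y Y' = symdiff X W" "symdiff Y (symdiff X W) = Y'"
        by (auto simp: Y'_def symdiff_def)
      moreover have "finite Y'" using that True by (auto simp: Y'_def symdiff_def intro: finite_subset_Omega)
      ultimately show ?thesis
        using cl_sign_cocycle[of X Y Y'] that by (simp add: Y'_def finite_subset_Omega)
    qed
    moreover have "symdiff (symdiff X Y) W = symdiff Y (symdiff X W)" for X Y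
      by (auto simp: symdiff_def)
    ultimately show ?thesis
      using True by (simp add: cl_mul_mul_left_apply cl_mul_mul_right_apply)
  qed (simp add: cl_mul_apply)
qed

lemma cl_e_mul:
  assumes "X \<subseteq> Omega" "Y \<subseteq> Omega"
  shows "cl_mul (cl_e X) (cl_e Y) = cl_smul (cl_sign X Y) (cl_e (symdiff X Y))"
proof
  fix Z
  show "cl_mul (cl_e X) (cl_e Y) Z = cl_smul (cl_sign X Y) (cl_e (symdiff X Y)) Z"
  proof (cases "Z \<subseteq> Omega")
    case True
    have "cl_mul (cl_e X) (cl_e Y) Z
        = (\<Sum>X'\<in>Pow Omega. cl_sign X' (symdiff X' Z) * cl_e X X' * cl_e Y (symdiff X' Z))"
      using True by (simp add: cl_mul_apply)
    also have "\<dots> = (\<Sum>X'\<in>Pow Omega. if X' = X then cl_sign X (symdiff X Z) * cl_e Y (symdiff X Z) else 0)"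
      by (rule sum.cong[OF refl]) (simp add: cl_e_def)
    also have "\<dots> = cl_sign X (symdiff X Z) * cl_e Y (symdiff X Z)" using assms by simp
    finally show ?thesis by (auto simp: cl_smul_def cl_e_def symdiff_eq_iff)
  next
    case False
    then have "Z \<noteq> symdiff X Y" using assms by (auto simp: symdiff_def)
    with False show ?thesis by (simp add: cl_mul_apply cl_smul_def cl_e_def)
  qed
qed

lemma cl_mul_add_left: "cl_mul (cl_add f g) h = cl_add (cl_mul f h) (cl_mul g h)"
  by (rule ext) (simp add: cl_mul_apply cl_add_def algebra_simps sum.distrib)

lemma cl_mul_add_right: "cl_mul f (cl_add g h) = cl_add (cl_mul f g) (cl_mul f h)"
  by (rule ext) (simp add: cl_mul_apply cl_add_def algebra_simps sum.distrib)

lemma cl_mul_smul_left: "cl_mul (cl_smul c f) h = cl_smul c (cl_mul f h)"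
  by (rule ext) (simp add: cl_mul_apply cl_smul_def algebra_simps sum_distrib_left)

lemma cl_mul_smul_right: "cl_mul f (cl_smul c h) = cl_smul c (cl_mul f h)"
  by (rule ext) (simp add: cl_mul_apply cl_smul_def algebra_simps sum_distrib_left)

lemma cl_one_mul: "f \<in> cl_carrier \<Longrightarrow> cl_mul cl_one f = f"
proof
  fix Z assume f: "f \<in> cl_carrier"
  show "cl_mul cl_one f Z = f Z"
  proof (cases "Z \<subseteq> Omega")
    case True
    then have "cl_mul cl_one f Z = (\<Sum>X\<in>Pow Omega. cl_sign X (symdiff X Z) * cl_one X * f (symdiff X Z))"
      by (simp add: cl_mul_apply)
    also have "\<dots> = (\<Sum>X\<in>Pow Omega. if X = {} then f Z else 0)"
      by (rule sum.cong[OF refl]) (simp add: cl_one_def cl_e_def)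
    finally show ?thesis by simp
  qed (use f in \<open>auto simp: cl_mul_apply cl_carrier_def\<close>)
qed

lemma cl_mul_one: "f \<in> cl_carrier \<Longrightarrow> cl_mul f cl_one = f"
proof
  fix Z assume f: "f \<in> cl_carrier"
  show "cl_mul f cl_one Z = f Z"
  proof (cases "Z \<subseteq> Omega")
    case True
    then have "cl_mul f cl_one Z = (\<Sum>X\<in>Pow Omega. cl_sign X (symdiff X Z) * f X * cl_one (symdiff X Z))"
      by (simp add: cl_mul_apply)
    also have "\<dots> = (\<Sum>X\<in>Pow Omega. if X = Z then f X else 0)"
      by (rule sum.cong[OF refl]) (auto simp: cl_one_def cl_e_def symdiff_eq_iff)
    finally show ?thesis using True by simp
  qed (use f in \<open>auto simp: cl_mul_apply cl_carrier_def\<close>)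
qed

lemma cl_carrier_closed [simp]:
  "cl_zero \<in> cl_carrier" "cl_one \<in> cl_carrier"
  "f \<in> cl_carrier \<Longrightarrow> g \<in> cl_carrier \<Longrightarrow> cl_add f g \<in> cl_carrier"
  "f \<in> cl_carrier \<Longrightarrow> cl_neg f \<in> cl_carrier"
  "f \<in> cl_carrier \<Longrightarrow> cl_smul c f \<in> cl_carrier"
  "X \<subseteq> Omega \<Longrightarrow> cl_e X \<in> cl_carrier"
  by (auto simp: cl_carrier_def cl_zero_def cl_one_def cl_e_def cl_add_def cl_neg_def cl_smul_def)

(* cl_mul only reads coordinates indexed by subsets of Omega, so cl_one is a two-sided unit
   only on cl_carrier. *)
typedef clifford = cl_carrier
  by (rule exI[of _ cl_zero]) simp

setup_lifting type_definition_clifford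

instantiation clifford :: real_algebra_1
begin

lift_definition zero_clifford :: clifford is cl_zero by simp
lift_definition one_clifford :: clifford is cl_one by simp
lift_definition plus_clifford :: "clifford \<Rightarrow> clifford \<Rightarrow> clifford" is cl_add by simp
lift_definition uminus_clifford :: "clifford \<Rightarrow> clifford" is cl_neg by simp
lift_definition minus_clifford :: "clifford \<Rightarrow> clifford \<Rightarrow> clifford" is "\<lambda>f g. cl_add f (cl_neg g)"
  by simp
lift_definition times_clifford :: "clifford \<Rightarrow> clifford \<Rightarrow> clifford" is cl_mul by simp
lift_definition scaleR_clifford :: "real \<Rightarrow> clifford \<Rightarrow> clifford" is cl_smul by simp

instance
proof (standard; transfer)
  show "cl_mul (cl_mul a b) c = cl_mul a (cl_mul b c)" for a b c by (rule cl_mul_assoc)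
  show "cl_mul (cl_add a b) c = cl_add (cl_mul a c) (cl_mul b c)" for a b c by (rule cl_mul_add_left)
  show "cl_mul a (cl_add b c) = cl_add (cl_mul a b) (cl_mul a c)" for a b c by (rule cl_mul_add_right)
  show "cl_mul (cl_smul r x) y = cl_smul r (cl_mul x y)" for r x y by (rule cl_mul_smul_left)
  show "cl_mul x (cl_smul r y) = cl_smul r (cl_mul x y)" for r x y by (rule cl_mul_smul_right)
  show "cl_zero \<noteq> cl_one" by (auto simp: cl_zero_def cl_one_def cl_e_def fun_eq_iff)
qed (auto simp: cl_one_mul cl_mul_one cl_add_def cl_neg_def cl_smul_def cl_zero_def fun_eq_iff algebra_simps)

end

definition cl_basis :: "nat set \<Rightarrow> clifford" where
  "cl_basis X = Abs_clifford (cl_e X)"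

lemma Rep_cl_basis: "X \<subseteq> Omega \<Longrightarrow> Rep_clifford (cl_basis X) = cl_e X"
  by (simp add: cl_basis_def Abs_clifford_inverse)

lemma cl_basis_mult:
  "X \<subseteq> Omega \<Longrightarrow> Y \<subseteq> Omega \<Longrightarrow> cl_basis X * cl_basis Y = cl_sign X Y *\<^sub>R cl_basis (symdiff X Y)"
  by (simp add: Rep_clifford_inject[symmetric] times_clifford.rep_eq scaleR_clifford.rep_eq
      Rep_cl_basis cl_e_mul symdiff_subset_Omega_iff)

lemma cl_basis_empty: "cl_basis {} = 1"
  by (simp add: Rep_clifford_inject[symmetric] one_clifford.rep_eq Rep_cl_basis cl_one_def)

lemma cl_basis_prod_list:
  assumes "distinct xs" "set xs \<subseteq> Omega"
  shows "\<exists>s\<in>{1, -1}. prod_list (map (\<lambda>a. cl_basis {a}) xs) = s *\<^sub>R cl_basis (set xs)"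
  using assms
proof (induction xs)
  case Nil
  then show ?case by (auto simp: cl_basis_empty)
next
  case (Cons a xs)
  then have "distinct xs" "set xs \<subseteq> Omega" by simp_all
  then obtain s where s: "s \<in> {1, -1}" "prod_list (map (\<lambda>a. cl_basis {a}) xs) = s *\<^sub>R cl_basis (set xs)"
    using Cons.IH by blast
  have "symdiff {a} (set xs) = set (a # xs)" using Cons.prems by (auto simp: symdiff_def)
  then have "prod_list (map (\<lambda>a. cl_basis {a}) (a # xs)) = (s * cl_sign {a} (set xs)) *\<^sub>R cl_basis (set (a # xs))"
    using s(2) Cons.prems by (simp add: cl_basis_mult)
  moreover have "s * cl_sign {a} (set xs) \<in> {1, -1}"
    using s(1) cl_sign_cases[of "{a}" "set xs"] by auto
  ultimately show ?case by blast
qed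

lemma cl_basis_singleton_sq: "i \<in> Omega \<Longrightarrow> cl_basis {i} * cl_basis {i} = -1"
  by (simp add: cl_basis_mult cl_sign_singleton_self cl_basis_empty)

lemma cl_basis_singletons_anticommute:
  "i \<in> Omega \<Longrightarrow> j \<in> Omega \<Longrightarrow> i \<noteq> j \<Longrightarrow> cl_basis {j} * cl_basis {i} = - (cl_basis {i} * cl_basis {j})"
  by (simp add: cl_basis_mult cl_sign_singletons_swap[of i j] symdiff_commute[of "{j}"])

definition bivec :: "nat \<Rightarrow> nat \<Rightarrow> clifford" where
  "bivec i j = cl_basis {i} * cl_basis {j}"

lemma bivec_sq:
  assumes "i \<in> Omega" "j \<in> Omega" "i \<noteq> j"
  shows "bivec i j * bivec i j = -1"
proof -
  have "bivec i j * bivec i j = cl_basis {i} * (cl_basis {j} * cl_basis {i}) * cl_basis {j}"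
    by (simp add: bivec_def mult.assoc)
  also have "\<dots> = - ((cl_basis {i} * cl_basis {i}) * (cl_basis {j} * cl_basis {j}))"
    using assms by (simp add: cl_basis_singletons_anticommute[OF assms] mult.assoc)
  finally show ?thesis using assms by (simp add: cl_basis_singleton_sq)
qed

lemma bivec_commute:
  assumes "distinct [a, b, c, d]" "{a, b, c, d} \<subseteq> Omega"
  shows "bivec a b * bivec c d = bivec c d * bivec a b"
proof -
  have swap: "cl_basis {a} * (cl_basis {c} * w) = - (cl_basis {c} * (cl_basis {a} * w))"
    "cl_basis {a} * (cl_basis {d} * w) = - (cl_basis {d} * (cl_basis {a} * w))"
    "cl_basis {b} * (cl_basis {c} * w) = - (cl_basis {c} * (cl_basis {b} * w))"
    "cl_basis {b} * (cl_basis {d} * w) = - (cl_basis {d} * (cl_basis {b} * w))" for w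
    using assms by (simp_all add: mult.assoc[symmetric] cl_basis_singletons_anticommute[of c a]
      cl_basis_singletons_anticommute[of d a] cl_basis_singletons_anticommute[of c b]
      cl_basis_singletons_anticommute[of d b])
  have "cl_basis {b} * cl_basis {d} = - (cl_basis {d} * cl_basis {b})"
    "cl_basis {a} * cl_basis {d} = - (cl_basis {d} * cl_basis {a})"
    using assms by (simp_all add: cl_basis_singletons_anticommute[of d b] cl_basis_singletons_anticommute[of d a])
  then show ?thesis by (simp add: bivec_def mult.assoc swap)
qed

section \<open>Spin\<close>

lemma cl_vec_two_coords:
  assumes "i \<in> Omega" "j \<in> Omega" "i \<noteq> j"
  shows "cl_vec (\<lambda>k. if k = i then a else if k = j then b else 0)
    = Rep_clifford (a *\<^sub>R cl_basis {i} + b *\<^sub>R cl_basis {j})"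
proof
  fix Z
  have R: "Rep_clifford (a *\<^sub>R cl_basis {i} + b *\<^sub>R cl_basis {j}) Z
      = a * (if Z = {i} then 1 else 0) + b * (if Z = {j} then 1 else 0)"
    using assms by (simp add: plus_clifford.rep_eq scaleR_clifford.rep_eq Rep_cl_basis cl_add_def
      cl_smul_def cl_e_def)
  show "cl_vec (\<lambda>k. if k = i then a else if k = j then b else 0) Z
      = Rep_clifford (a *\<^sub>R cl_basis {i} + b *\<^sub>R cl_basis {j}) Z"
  proof (cases "Z \<subseteq> Omega \<and> card Z = 1")
    case True
    then obtain z where "Z = {z}" by (auto simp: card_1_singleton_iff)
    then show ?thesis unfolding R using True assms by (auto simp: cl_vec_def)
  next
    case False
    then have "Z \<noteq> {i}" "Z \<noteq> {j}" using assms by auto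
    then show ?thesis unfolding R by (simp only: cl_vec_def if_not_P[OF False]) simp
  qed
qed

lemma unit_vec_two:
  assumes "i \<in> Omega" "j \<in> Omega" "i \<noteq> j" "a\<^sup>2 + b\<^sup>2 = 1"
  shows "Rep_clifford (a *\<^sub>R cl_basis {i} + b *\<^sub>R cl_basis {j}) \<in> unit_vecs"
proof -
  let ?v = "\<lambda>k. if k = i then a else if k = j then b else 0"
  have "(\<Sum>k\<in>Omega. (?v k)\<^sup>2) = (\<Sum>k\<in>Omega. (if k = i then a\<^sup>2 else 0) + (if k = j then b\<^sup>2 else 0))"
    by (rule sum.cong[OF refl]) (use assms in auto)
  also have "\<dots> = 1" using assms by (simp add: sum.distrib)
  finally show ?thesis
    unfolding unit_vecs_def cl_vec_two_coords[OF assms(1-3), symmetric] by blast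
qed

lemma unit_vec_pair_mult:
  assumes "i \<in> Omega" "j \<in> Omega" "i \<noteq> j" "e \<in> {1, -1}"
  shows "\<exists>u v. Rep_clifford u \<in> unit_vecs \<and> Rep_clifford v \<in> unit_vecs \<and>
    u * v = (1 / sqrt 2) *\<^sub>R (1 + e *\<^sub>R bivec i j)"
proof (intro exI conjI)
  have "(if i = 0 then 1 else 0) \<in> Omega" "(if i = 0 then 1 else 0) \<noteq> i"
    by (auto simp: Omega_def)
  then show "Rep_clifford (cl_basis {i}) \<in> unit_vecs"
    using unit_vec_two[of i "if i = 0 then 1 else 0" 1 0] assms(1) by simp
  show "Rep_clifford ((- (1 / sqrt 2)) *\<^sub>R cl_basis {i} + (e / sqrt 2) *\<^sub>R cl_basis {j}) \<in> unit_vecs"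
    using assms by (intro unit_vec_two) (auto simp: power_divide)
  have "cl_basis {i} * ((- (1 / sqrt 2)) *\<^sub>R cl_basis {i} + (e / sqrt 2) *\<^sub>R cl_basis {j})
      = (- (1 / sqrt 2)) *\<^sub>R (cl_basis {i} * cl_basis {i}) + (e / sqrt 2) *\<^sub>R bivec i j"
    by (simp only: distrib_left mult_scaleR_right bivec_def)
  also have "\<dots> = (1 / sqrt 2) *\<^sub>R (1 + e *\<^sub>R bivec i j)"
    using assms by (simp add: cl_basis_singleton_sq scaleR_add_right)
  finally show "cl_basis {i} * ((- (1 / sqrt 2)) *\<^sub>R cl_basis {i} + (e / sqrt 2) *\<^sub>R cl_basis {j})
      = (1 / sqrt 2) *\<^sub>R (1 + e *\<^sub>R bivec i j)" .
qed

lemma Spin_one: "cl_one \<in> Spin"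
  unfolding Spin_def by (rule CollectI, rule exI[of _ "[]"]) simp

lemma Spin_subset_carrier: "Spin \<subseteq> cl_carrier"
proof
  fix x assume "x \<in> Spin"
  then obtain us where "x = foldr cl_mul us cl_one" unfolding Spin_def by blast
  then show "x \<in> cl_carrier" by (cases us) simp_all
qed

lemma Spin_mult_unit_vecs:
  assumes "Rep_clifford u \<in> unit_vecs" "Rep_clifford v \<in> unit_vecs" "Rep_clifford g \<in> Spin"
  shows "Rep_clifford (u * v * g) \<in> Spin"
proof -
  obtain us where us: "Rep_clifford g = foldr cl_mul us cl_one" "even (length us)" "set us \<subseteq> unit_vecs"
    using assms(3) unfolding Spin_def by blast
  have "Rep_clifford (u * v * g) = foldr cl_mul (Rep_clifford u # Rep_clifford v # us) cl_one"
    by (simp add: times_clifford.rep_eq us(1) cl_mul_assoc)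
  then show ?thesis
    using us(2,3) assms(1,2) unfolding Spin_def
    by (intro CollectI exI[of _ "Rep_clifford u # Rep_clifford v # us"]) auto
qed

lemma Spin_rotor_prod:
  assumes "\<forall>(i, j, e) \<in> set ps. i \<in> Omega \<and> j \<in> Omega \<and> i \<noteq> j \<and> e \<in> {1, -1}"
  shows "Rep_clifford (prod_list (map (\<lambda>(i, j, e). (1 / sqrt 2) *\<^sub>R (1 + e *\<^sub>R bivec i j)) ps)) \<in> Spin"
  using assms
proof (induction ps)
  case Nil
  then show ?case by (simp add: one_clifford.rep_eq Spin_one)
next
  case (Cons p ps)
  obtain i j e where p: "p = (i, j, e)" by (cases p) auto
  then obtain u v where uv: "Rep_clifford u \<in> unit_vecs" "Rep_clifford v \<in> unit_vecs"
    "u * v = (1 / sqrt 2) *\<^sub>R (1 + e *\<^sub>R bivec i j)"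
    using unit_vec_pair_mult[of i j e] Cons.prems by auto
  let ?f = "\<lambda>(i, j, e). (1 / sqrt 2) *\<^sub>R (1 + e *\<^sub>R bivec i j)"
  have "prod_list (map ?f (p # ps)) = u * v * prod_list (map ?f ps)" using uv(3) p by simp
  moreover have "Rep_clifford (prod_list (map ?f ps)) \<in> Spin" using Cons by simp
  ultimately show ?case by (metis Spin_mult_unit_vecs uv(1,2))
qed

lemma cm_kernel_add: "n \<in> cm_kernel G \<Longrightarrow> m \<in> cm_kernel G \<Longrightarrow> cl_add n m \<in> cm_kernel G"
proof (induction rule: cm_kernel.induct)
  case zero
  then show ?case by (simp add: cl_add_def cl_zero_def)
next
  case (step x g n)
  have "cl_add (cl_add (cl_add (cl_mul x g) (cl_neg x)) n) m
      = cl_add (cl_add (cl_mul x g) (cl_neg x)) (cl_add n m)"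
    by (simp add: cl_add_def add.assoc)
  then show ?case using step by (simp add: cm_kernel.step)
qed

lemma cm_kernel_smul: "n \<in> cm_kernel G \<Longrightarrow> cl_smul c n \<in> cm_kernel G"
proof (induction rule: cm_kernel.induct)
  case zero
  have "cl_smul c cl_zero = cl_zero" by (simp add: cl_smul_def cl_zero_def)
  then show ?case by (simp add: cm_kernel.zero)
next
  case (step x g n)
  have "cl_smul c (cl_add (cl_add (cl_mul x g) (cl_neg x)) n)
      = cl_add (cl_add (cl_mul (cl_smul c x) g) (cl_neg (cl_smul c x))) (cl_smul c n)"
    by (simp add: cl_mul_smul_left) (simp add: cl_add_def cl_smul_def cl_neg_def algebra_simps)
  then show ?case using step by (simp add: cm_kernel.step)
qed

definition cm_equiv :: "cl set \<Rightarrow> clifford \<Rightarrow> clifford \<Rightarrow> bool" where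
  "cm_equiv G a b \<longleftrightarrow> Rep_clifford (a - b) \<in> cm_kernel G"

lemma cm_eq_Rep_iff: "cm_eq G (Rep_clifford a) (Rep_clifford b) \<longleftrightarrow> cm_equiv G a b"
  by (simp add: cm_eq_def cm_equiv_def minus_clifford.rep_eq)

lemma cm_equiv_refl: "cm_equiv G a a"
  by (simp add: cm_equiv_def zero_clifford.rep_eq cm_kernel.zero)

lemma cm_equiv_scaleR: "cm_equiv G a b \<Longrightarrow> cm_equiv G (r *\<^sub>R a) (r *\<^sub>R b)"
  unfolding cm_equiv_def scaleR_right_diff_distrib[symmetric] scaleR_clifford.rep_eq
  by (rule cm_kernel_smul)

lemma cm_equiv_sym: "cm_equiv G a b \<Longrightarrow> cm_equiv G b a"
  using cm_equiv_scaleR[of G a b "-1"] by (simp add: cm_equiv_def)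

lemma cm_equiv_add: "cm_equiv G a b \<Longrightarrow> cm_equiv G c d \<Longrightarrow> cm_equiv G (a + c) (b + d)"
  unfolding cm_equiv_def add_diff_add plus_clifford.rep_eq by (rule cm_kernel_add)

lemma cm_equiv_trans: "cm_equiv G a b \<Longrightarrow> cm_equiv G b c \<Longrightarrow> cm_equiv G a c"
  using cm_equiv_add[of G a b b c] by (simp add: cm_equiv_def)

lemma cm_equiv_mult_G: "g \<in> G \<Longrightarrow> g \<in> cl_carrier \<Longrightarrow> cm_equiv G (a * Abs_clifford g) a"
proof -
  assume g: "g \<in> G" "g \<in> cl_carrier"
  have "cl_add (cl_add (cl_mul (Rep_clifford a) g) (cl_neg (Rep_clifford a))) cl_zero \<in> cm_kernel G"
    using g(1) Rep_clifford by (intro cm_kernel.step cm_kernel.zero)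
  then show ?thesis
    using g(2) by (simp add: cm_equiv_def minus_clifford.rep_eq times_clifford.rep_eq
      Abs_clifford_inverse cl_add_def cl_zero_def)
qed

lemma good_G_code_word_sign:
  assumes "good_G Gc G" "D \<in> Gc" "D \<subseteq> Omega"
  shows "\<exists>\<delta>\<in>{1, -1}. \<forall>a. cm_equiv G (a * (\<delta> *\<^sub>R cl_basis D)) a"
proof -
  have carrier: "g \<in> cl_carrier" if "g \<in> G" for g
    using assms(1) Spin_subset_carrier that unfolding good_G_def by blast
  have "cl_e D \<in> G \<or> cl_neg (cl_e D) \<in> G" using assms(1,2) unfolding good_G_def by blast
  moreover have "Abs_clifford (cl_e D) = 1 *\<^sub>R cl_basis D" by (simp add: cl_basis_def)
  moreover have "Abs_clifford (cl_neg (cl_e D)) = (-1) *\<^sub>R cl_basis D"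
    using assms(3) by (simp add: Rep_clifford_inject[symmetric] Abs_clifford_inverse
      uminus_clifford.rep_eq Rep_cl_basis)
  ultimately show ?thesis using carrier cm_equiv_mult_G by (metis insertCI)
qed

lemma cm_equiv_code_shift:
  assumes "good_G Gc G" "X \<subseteq> Omega" "Y \<subseteq> Omega" "symdiff X Y \<in> Gc"
  shows "\<exists>\<tau>\<in>{1, -1}. \<forall>a. cm_equiv G (a * cl_basis X) (\<tau> *\<^sub>R (a * cl_basis Y))"
proof -
  define D where "D = symdiff Y X"
  have D: "D \<in> Gc" "D \<subseteq> Omega"
    using assms by (simp_all add: D_def symdiff_commute symdiff_subset_Omega_iff)
  obtain \<delta> where \<delta>: "\<delta> \<in> {1, -1}" "\<And>a. cm_equiv G (a * (\<delta> *\<^sub>R cl_basis D)) a"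
    using good_G_code_word_sign[OF assms(1) D] by blast
  define s where "s = cl_sign Y D"
  have "cl_basis Y * cl_basis D = s *\<^sub>R cl_basis X"
    using assms(3) D(2) by (simp add: cl_basis_mult s_def D_def)
  then have "a * cl_basis X = (s * \<delta>) *\<^sub>R (a * cl_basis Y * (\<delta> *\<^sub>R cl_basis D))" for a
    using \<delta>(1) cl_sign_sq[of Y D] by (auto simp: s_def mult.assoc)
  then have "cm_equiv G (a * cl_basis X) ((s * \<delta>) *\<^sub>R (a * cl_basis Y))" for a
    using cm_equiv_scaleR[OF \<delta>(2)] by metis
  moreover have "s * \<delta> \<in> {1, -1}" using \<delta>(1) cl_sign_cases[of Y D] by (auto simp: s_def)
  ultimately show ?thesis by blast
qed

(* As (x1 x2 x3)^2 = -1, we have x4 = -(x1 x2 x3)(x1 x2 x3 x4); the error term w P - w vanishes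
   in any module on which P = x1 x2 x3 x4 acts trivially. *)
lemma rotor_product_expansion:
  fixes x1 x2 x3 x4 :: "'a::ring_1"
  assumes "x1 * x1 = -1" "x2 * x2 = -1" "x3 * x3 = -1"
    and "x2 * x1 = x1 * x2" "x3 * x1 = x1 * x3" "x3 * x2 = x2 * x3"
  shows "\<exists>w. (1 + x1) * (1 + x2) * (1 + x3) * (1 + x4)
    = 2 * (1 + x1 * x2 + x1 * x3 - (x1 * x2) * (x1 * x3)) + (w * (x1 * x2 * x3 * x4) - w)"
proof -
  let ?y = "(1 + x1) * (1 + x2) * (1 + x3)" and ?c = "x1 * x2 * x3"
  have r: "x1 * (x1 * w) = -w" "x2 * (x2 * w) = -w" "x3 * (x3 * w) = -w"
    "x2 * (x1 * w) = x1 * (x2 * w)" "x3 * (x1 * w) = x1 * (x3 * w)" "x3 * (x2 * w) = x2 * (x3 * w)" for w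
    using assms by (simp_all add: mult.assoc[symmetric])
  obtain P where P: "P = ?c * x4" by blast
  then have "x4 = - (?c * P)" by (simp add: mult.assoc r)
  then have "?y * (1 + x4)
      = 2 * (1 + x1 * x2 + x1 * x3 - (x1 * x2) * (x1 * x3)) + ((- ?y * ?c) * P - (- ?y * ?c))"
    by (simp add: algebra_simps r assms mult_2)
  then show ?thesis using P by blast
qed

lemma spin_orbit_commuting_bivectors:
  fixes i1 j1 i2 j2 i3 j3 i4 j4 :: nat and e2 e3 e4 :: real
  defines "x1 \<equiv> bivec i1 j1" and "x2 \<equiv> e2 *\<^sub>R bivec i2 j2"
    and "x3 \<equiv> e3 *\<^sub>R bivec i3 j3" and "x4 \<equiv> e4 *\<^sub>R bivec i4 j4"
  assumes dist: "distinct [i1, j1, i2, j2, i3, j3, i4, j4]"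
    and om: "{i1, j1, i2, j2, i3, j3, i4, j4} \<subseteq> Omega"
    and signs: "e2 \<in> {1, -1}" "e3 \<in> {1, -1}" "e4 \<in> {1, -1}"
    and trivial: "\<And>a. cm_equiv G (a * (x1 * x2 * x3 * x4)) a"
  shows "\<exists>g. Rep_clifford g \<in> Spin \<and>
    cm_equiv G g ((1/2) *\<^sub>R (1 + x1 * x2 + x1 * x3 - (x1 * x2) * (x1 * x3)))"
proof (intro exI conjI)
  let ?rotor = "\<lambda>(i, j, e). (1 / sqrt 2) *\<^sub>R (1 + e *\<^sub>R bivec i j)"
  let ?g = "prod_list (map ?rotor [(i1, j1, 1), (i2, j2, e2), (i3, j3, e3), (i4, j4, e4)])"
  show "Rep_clifford ?g \<in> Spin"
    using dist om signs by (intro Spin_rotor_prod) auto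
  have g: "?g = (1/4) *\<^sub>R ((1 + x1) * (1 + x2) * (1 + x3) * (1 + x4))"
    by (simp add: x1_def x2_def x3_def x4_def mult.assoc)
  have squares: "x1 * x1 = -1" "x2 * x2 = -1" "x3 * x3 = -1"
    using dist om signs by (auto simp: x1_def x2_def x3_def bivec_sq)
  have "bivec i2 j2 * bivec i1 j1 = bivec i1 j1 * bivec i2 j2"
    "bivec i3 j3 * bivec i1 j1 = bivec i1 j1 * bivec i3 j3"
    "bivec i3 j3 * bivec i2 j2 = bivec i2 j2 * bivec i3 j3"
    using dist om by (auto intro!: bivec_commute)
  then have "x2 * x1 = x1 * x2" "x3 * x1 = x1 * x3" "x3 * x2 = x2 * x3"
    by (simp_all add: x1_def x2_def x3_def ac_simps)
  then obtain w where w: "(1 + x1) * (1 + x2) * (1 + x3) * (1 + x4)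
      = 2 * (1 + x1 * x2 + x1 * x3 - (x1 * x2) * (x1 * x3)) + (w * (x1 * x2 * x3 * x4) - w)"
    using rotor_product_expansion squares by blast
  show "cm_equiv G ?g ((1/2) *\<^sub>R (1 + x1 * x2 + x1 * x3 - (x1 * x2) * (x1 * x3)))"
  proof -
    let ?S = "1 + x1 * x2 + x1 * x3 - (x1 * x2) * (x1 * x3)"
    have "cm_equiv G (w * (x1 * x2 * x3 * x4) + - w) (w + - w)"
      by (intro cm_equiv_add trivial cm_equiv_refl)
    then have "cm_equiv G (2 * ?S + (w * (x1 * x2 * x3 * x4) - w)) (2 * ?S)"
      using cm_equiv_add[OF cm_equiv_refl] by fastforce
    then have "cm_equiv G ?g ((1/4) *\<^sub>R (2 * ?S))"
      unfolding g w by (rule cm_equiv_scaleR)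
    moreover have "(1/4 :: real) *\<^sub>R (2 * ?S) = (1/2) *\<^sub>R ?S"
      by (simp only: mult_2 scaleR_add_right scaleR_left_distrib[symmetric]) simp
    ultimately show ?thesis by simp
  qed
qed

lemma spin_orbit_octad:
  assumes G: "good_G Gc G"
    and dist: "distinct [i1, j1, i2, j2, i3, j3, i4, j4]"
    and om: "{i1, j1, i2, j2, i3, j3, i4, j4} \<subseteq> Omega"
    and octad: "{i1, j1, i2, j2, i3, j3, i4, j4} \<in> Gc"
    and signs: "\<alpha> \<in> {1, -1}" "\<beta> \<in> {1, -1}"
  shows "\<exists>g. Rep_clifford g \<in> Spin \<and> cm_equiv G g ((1/2) *\<^sub>R (1 + \<alpha> *\<^sub>R cl_basis {i1, j1, i2, j2}
    + \<beta> *\<^sub>R cl_basis {i1, j1, i3, j3} - (\<alpha> * \<beta>) *\<^sub>R (cl_basis {i1, j1, i2, j2} * cl_basis {i1, j1, i3, j3})))"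
proof -
  let ?A = "{i1, j1, i2, j2}" and ?B = "{i1, j1, i3, j3}" and ?D = "{i1, j1, i2, j2, i3, j3, i4, j4}"
  have "\<exists>s\<in>{1, -1}. bivec i1 j1 * bivec i2 j2 = s *\<^sub>R cl_basis ?A"
    using cl_basis_prod_list[of "[i1, j1, i2, j2]"] dist om by (simp add: bivec_def mult.assoc)
  then obtain sA where sA: "sA \<in> {1, -1}" "bivec i1 j1 * bivec i2 j2 = sA *\<^sub>R cl_basis ?A" by blast
  have "\<exists>s\<in>{1, -1}. bivec i1 j1 * bivec i3 j3 = s *\<^sub>R cl_basis ?B"
    using cl_basis_prod_list[of "[i1, j1, i3, j3]"] dist om by (simp add: bivec_def mult.assoc)
  then obtain sB where sB: "sB \<in> {1, -1}" "bivec i1 j1 * bivec i3 j3 = sB *\<^sub>R cl_basis ?B" by blast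
  have "\<exists>s\<in>{1, -1}. bivec i1 j1 * bivec i2 j2 * bivec i3 j3 * bivec i4 j4 = s *\<^sub>R cl_basis ?D"
    using cl_basis_prod_list[of "[i1, j1, i2, j2, i3, j3, i4, j4]"] dist om by (simp add: bivec_def mult.assoc)
  then obtain sD where sD: "sD \<in> {1, -1}"
    "bivec i1 j1 * bivec i2 j2 * bivec i3 j3 * bivec i4 j4 = sD *\<^sub>R cl_basis ?D" by blast
  obtain \<delta> where \<delta>: "\<delta> \<in> {1, -1}" "\<And>a. cm_equiv G (a * (\<delta> *\<^sub>R cl_basis ?D)) a"
    using good_G_code_word_sign[OF G octad om] by blast
  (* The signs make x1 x2 = \<alpha> e_A and x1 x3 = \<beta> e_B, and x1 x2 x3 x4 the element of G over the octad. *)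
  define e2 e3 where "e2 = \<alpha> * sA" and "e3 = \<beta> * sB"
  define e4 where "e4 = e2 * e3 * sD * \<delta>"
  have e: "e2 \<in> {1, -1}" "e3 \<in> {1, -1}" "e4 \<in> {1, -1}"
    using signs sA(1) sB(1) sD(1) \<delta>(1) by (auto simp: e2_def e3_def e4_def)
  have "bivec i1 j1 * (e2 *\<^sub>R bivec i2 j2) = \<alpha> *\<^sub>R cl_basis ?A"
    using sA signs by (auto simp: e2_def)
  moreover have "bivec i1 j1 * (e3 *\<^sub>R bivec i3 j3) = \<beta> *\<^sub>R cl_basis ?B"
    using sB signs by (auto simp: e3_def)
  moreover have "bivec i1 j1 * (e2 *\<^sub>R bivec i2 j2) * (e3 *\<^sub>R bivec i3 j3) * (e4 *\<^sub>R bivec i4 j4)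
      = \<delta> *\<^sub>R cl_basis ?D"
    using sD e(1,2) \<delta>(1) by (auto simp: e4_def)
  ultimately show ?thesis
    using spin_orbit_commuting_bivectors[OF dist om e, of G] \<delta>(2) by (simp add: mult.commute[of \<beta> \<alpha>])
qed

lemma cm_equiv_half_sum_shift:
  assumes shift: "\<And>x. cm_equiv G (x * b) (\<tau> *\<^sub>R (x * b'))"
    and product: "cm_equiv G (a * b) (\<sigma> *\<^sub>R c)"
  shows "cm_equiv G ((1/2) *\<^sub>R (1 + \<alpha> *\<^sub>R a + \<beta> *\<^sub>R b + (- \<sigma> * (\<alpha> * \<beta>)) *\<^sub>R c))
    ((1/2) *\<^sub>R (1 + \<alpha> *\<^sub>R a + (\<beta> * \<tau>) *\<^sub>R b' - (\<alpha> * (\<beta> * \<tau>)) *\<^sub>R (a * b')))"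
proof -
  have "cm_equiv G ((- (\<alpha> * \<beta>)) *\<^sub>R (\<sigma> *\<^sub>R c)) ((- (\<alpha> * \<beta>)) *\<^sub>R (\<tau> *\<^sub>R (a * b')))"
    using product by (intro cm_equiv_scaleR cm_equiv_trans[OF cm_equiv_sym shift])
  moreover have "(- \<sigma> * (\<alpha> * \<beta>)) *\<^sub>R c = (- (\<alpha> * \<beta>)) *\<^sub>R (\<sigma> *\<^sub>R c)" by (simp add: mult.commute)
  ultimately have shift_c: "cm_equiv G ((- \<sigma> * (\<alpha> * \<beta>)) *\<^sub>R c) ((- (\<alpha> * \<beta>)) *\<^sub>R (\<tau> *\<^sub>R (a * b')))"
    by (simp only:)
  have shift_b: "cm_equiv G b (\<tau> *\<^sub>R b')" using shift[of 1] by simp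
  have "cm_equiv G ((1/2) *\<^sub>R (1 + \<alpha> *\<^sub>R a + \<beta> *\<^sub>R b + (- \<sigma> * (\<alpha> * \<beta>)) *\<^sub>R c))
      ((1/2) *\<^sub>R (1 + \<alpha> *\<^sub>R a + \<beta> *\<^sub>R (\<tau> *\<^sub>R b') + (- (\<alpha> * \<beta>)) *\<^sub>R (\<tau> *\<^sub>R (a * b'))))"
    by (intro cm_equiv_scaleR cm_equiv_add cm_equiv_refl shift_b shift_c)
  moreover have "(1/2) *\<^sub>R (1 + \<alpha> *\<^sub>R a + \<beta> *\<^sub>R (\<tau> *\<^sub>R b') + (- (\<alpha> * \<beta>)) *\<^sub>R (\<tau> *\<^sub>R (a * b')))
      = (1/2) *\<^sub>R (1 + \<alpha> *\<^sub>R a + (\<beta> * \<tau>) *\<^sub>R b' - (\<alpha> * (\<beta> * \<tau>)) *\<^sub>R (a * b'))"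
    by (simp add: algebra_simps)
  ultimately show ?thesis by (simp only:)
qed

lemma in_spin_orbitI:
  assumes "Rep_clifford g \<in> Spin" "cm_equiv G g t"
  shows "in_spin_orbit G (Rep_clifford t)"
  using assms Spin_subset_carrier unfolding in_spin_orbit_def
  by (metis cl_mul_one cm_eq_Rep_iff subsetD)

section \<open>Octads of the Golay code\<close>

fun lin_comb :: "bool list \<Rightarrow> nat set list \<Rightarrow> nat set" where
  "lin_comb (c # cs) (g # gs) = symdiff (if c then g else {}) (lin_comb cs gs)"
| "lin_comb _ _ = {}"

lemma lin_comb_subset: "lin_comb b gs \<subseteq> \<Union> (set gs)"
  by (induction b gs rule: lin_comb.induct) (auto simp: symdiff_def)

lemma lin_comb_replicate_False: "lin_comb (replicate n False) gs = {}"
proof (induction n arbitrary: gs)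
  case (Suc n)
  then show ?case by (cases gs) simp_all
qed simp

lemma lin_comb_xor:
  "length b = length gs \<Longrightarrow> length b' = length gs \<Longrightarrow>
     lin_comb (map2 (\<noteq>) b b') gs = symdiff (lin_comb b gs) (lin_comb b' gs)"
proof (induction gs arbitrary: b b')
  case (Cons g gs)
  then obtain c cs c' cs' where "b = c # cs" "b' = c' # cs'"
    "length cs = length gs" "length cs' = length gs"
    by (metis length_Suc_conv)
  with Cons.IH show ?case by (auto simp: symdiff_def)
qed simp

lemma foldr_symdiff_nths:
  "foldr symdiff (nths gs I) {} = lin_comb (map (\<lambda>i. i \<in> I) [0..<length gs]) gs"
proof (induction gs arbitrary: I)
  case (Cons g gs)
  have "map (\<lambda>i. i \<in> I) [0..<length (g # gs)] = (0 \<in> I) # map (\<lambda>i. i \<in> {j. Suc j \<in> I}) [0..<length gs]"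
    by (simp add: upt_conv_Cons map_Suc_upt[symmetric] del: upt_Suc)
  then show ?case using Cons.IH[of "{j. Suc j \<in> I}"] by (simp add: nths_Cons)
qed simp

definition bits :: "nat set \<Rightarrow> bool list" where
  "bits S = map (\<lambda>i. i \<in> S) [0..<24]"

lemma count_list_bits: "S \<subseteq> {..<24} \<Longrightarrow> count_list (bits S) True = card S"
proof -
  assume "S \<subseteq> {..<24}"
  then have "set (filter (\<lambda>i. i \<in> S) [0..<24]) = S" by auto
  then have "card S = length (filter (\<lambda>i. i \<in> S) [0..<24])"
    by (metis distinct_card distinct_filter distinct_upt)
  then show ?thesis by (simp add: bits_def count_list_eq_length_filter filter_map comp_def)
qed

lemma xor_bits: "map2 (\<noteq>) (bits S) (bits T) = bits (symdiff S T)"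
  by (auto simp: bits_def map2_map_map symdiff_def)

(* Since 10000 exceeds the number 4096 of codewords, a total tally of 10759 over the code
   records exactly one word of weight below 8 and 759 words of weight 8. *)
definition tally :: "nat \<Rightarrow> nat" where
  "tally n = (if n < 8 then 10000 else if n = 8 then 1 else 0)"

fun weight_tally :: "bool list list \<Rightarrow> bool list \<Rightarrow> nat" where
  "weight_tally [] w = tally (count_list w True)"
| "weight_tally (g # gs) w = weight_tally gs w + weight_tally gs (map2 (\<noteq>) g w)"

lemma sum_lists_length_Suc:
  "(\<Sum>b | length b = Suc n. F b) = (\<Sum>b | length b = n. F (False # b)) + (\<Sum>b | length b = n. F (True # b))"
proof -
  let ?L = "{b :: bool list. length b = n}"
  have "{b. length b = Suc n} = Cons False ` ?L \<union> Cons True ` ?L"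
    by (auto simp: length_Suc_conv)
  moreover have "(\<Sum>b\<in>Cons False ` ?L \<union> Cons True ` ?L. F b) = (\<Sum>b\<in>Cons False ` ?L. F b) + (\<Sum>b\<in>Cons True ` ?L. F b)"
    by (rule sum.union_disjoint) (use finite_list_length[of n] in auto)
  ultimately show ?thesis by (simp add: sum.reindex)
qed

lemma weight_tally_eq_sum:
  "set gs \<subseteq> Pow {..<24} \<Longrightarrow> S \<subseteq> {..<24} \<Longrightarrow>
     weight_tally (map bits gs) (bits S) = (\<Sum>b | length b = length gs. tally (card (symdiff S (lin_comb b gs))))"
proof (induction gs arbitrary: S)
  case Nil
  have "{b :: bool list. length b = 0} = {[]}" by auto
  then show ?case using Nil by (simp add: count_list_bits)
next
  case (Cons g gs)
  have "weight_tally (map bits (g # gs)) (bits S)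
      = weight_tally (map bits gs) (bits S) + weight_tally (map bits gs) (bits (symdiff g S))"
    by (simp only: list.map weight_tally.simps xor_bits)
  moreover have "symdiff g S \<subseteq> {..<24}" using Cons.prems by (auto simp: symdiff_def)
  moreover have "symdiff (symdiff g S) X = symdiff S (symdiff g X)" for X by (auto simp: symdiff_def)
  ultimately show ?case using Cons by (simp add: sum_lists_length_Suc)
qed

lemma weight_tally_golay: "weight_tally (map bits golay_gens) (bits {}) = 10759"
  by (simp add: bits_def golay_gens_def upt_rec tally_def)

definition golay_word :: "bool list \<Rightarrow> nat set" where
  "golay_word b = lin_comb b golay_gens"

lemma length_golay_gens: "length golay_gens = 12"
  by (simp add: golay_gens_def)

lemma golay_gens_subset: "set golay_gens \<subseteq> Pow {..<24}"
  by (simp add: golay_gens_def)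

lemma golay_word_subset: "golay_word b \<subseteq> {..<24}"
  unfolding golay_word_def using lin_comb_subset golay_gens_subset by blast

lemma golay_word_in_std: "length b = 12 \<Longrightarrow> golay_word b \<in> golay_std"
proof -
  assume b: "length b = 12"
  define I where "I = {i. i < 12 \<and> b ! i}"
  have "map (\<lambda>i. i \<in> I) [0..<12] = b"
    by (rule nth_equalityI) (auto simp: b I_def)
  then have "golay_word b = foldr symdiff (nths golay_gens I) {}"
    by (simp add: golay_word_def foldr_symdiff_nths length_golay_gens)
  moreover have "I \<subseteq> {..<12}" by (auto simp: I_def)
  ultimately show ?thesis unfolding golay_std_def by blast
qed

lemma golay_word_counts:
  "card {b. length b = 12 \<and> card (golay_word b) < 8} = 1"
  "card {b. length b = 12 \<and> card (golay_word b) = 8} = 759"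
proof -
  let ?W = "{b :: bool list. length b = 12}"
  define light heavy where "light = card {b \<in> ?W. card (golay_word b) < 8}"
    and "heavy = card {b \<in> ?W. card (golay_word b) = 8}"
  have fin: "finite ?W" by (rule finite_list_length)
  have "10759 = (\<Sum>b\<in>?W. tally (card (golay_word b)))"
    using weight_tally_golay weight_tally_eq_sum[OF golay_gens_subset, of "{}"]
    by (simp add: golay_word_def length_golay_gens)
  also have "\<dots> = (\<Sum>b\<in>?W. 10000 * (if card (golay_word b) < 8 then 1 else 0)
      + (if card (golay_word b) = 8 then 1 else 0))"
    by (rule sum.cong) (auto simp: tally_def)
  also have "\<dots> = 10000 * light + heavy"
    using fin by (simp add: light_def heavy_def sum.distrib sum_distrib_left[symmetric] sum.If_cases Int_def)
  finally have tally: "10000 * light + heavy = 10759" ..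
  have "heavy \<le> card ?W" unfolding heavy_def using fin by (intro card_mono) auto
  then have "heavy \<le> 4096" using card_lists_length_eq[of "UNIV :: bool set" 12] by simp
  have "light < 2"
  proof (rule ccontr)
    assume "\<not> light < 2"
    then show False using tally by linarith
  qed
  moreover have "light \<noteq> 0" using tally \<open>heavy \<le> 4096\<close> by auto
  ultimately have "light = 1" by (simp add: less_2_cases_iff)
  then show "card {b. length b = 12 \<and> card (golay_word b) < 8} = 1"
    "card {b. length b = 12 \<and> card (golay_word b) = 8} = 759"
    using tally by (simp_all add: light_def heavy_def)
qed

lemma golay_word_min_weight:
  assumes "length b = 12" "b \<noteq> replicate 12 False"
  shows "8 \<le> card (golay_word b)"
proof (rule ccontr)
  assume "\<not> 8 \<le> card (golay_word b)"
  then have "b \<in> {b. length b = 12 \<and> card (golay_word b) < 8}" using assms(1) by simp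
  moreover have "replicate 12 False \<in> {b. length b = 12 \<and> card (golay_word b) < 8}"
    by (simp add: golay_word_def lin_comb_replicate_False)
  ultimately show False using golay_word_counts(1) assms(2) by (metis card_1_singletonE singletonD)
qed

lemma golay_word_distance:
  assumes "length b = 12" "length b' = 12" "b \<noteq> b'"
  shows "8 \<le> card (symdiff (golay_word b) (golay_word b'))"
proof -
  have "symdiff (golay_word b) (golay_word b') = golay_word (map2 (\<noteq>) b b')"
    using lin_comb_xor[of b golay_gens b'] assms by (simp add: golay_word_def length_golay_gens)
  moreover have "map2 (\<noteq>) b b' \<noteq> replicate 12 False"
    using assms by (auto simp: list_eq_iff_nth_eq)
  ultimately show ?thesis using golay_word_min_weight assms by simp
qed

lemma subsets_covered_by_counting:
  assumes "finite V" and blocks: "\<And>D. D \<in> \<B> \<Longrightarrow> D \<subseteq> V \<and> card D = k"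
    and small_meets: "\<And>D D'. D \<in> \<B> \<Longrightarrow> D' \<in> \<B> \<Longrightarrow> D \<noteq> D' \<Longrightarrow> card (D \<inter> D') < t"
    and count: "card \<B> * (k choose t) = card V choose t"
    and "T \<subseteq> V" "card T = t"
  shows "\<exists>D\<in>\<B>. T \<subseteq> D"
proof -
  define subsets :: "'a set \<Rightarrow> 'a set set" where "subsets D = {S. S \<subseteq> D \<and> card S = t}" for D
  have fin: "finite D" if "D \<subseteq> V" for D by (rule finite_subset[OF that assms(1)])
  have "finite \<B>" using blocks assms(1) by (meson finite_Pow_iff finite_subset subsetI PowI)
  have finite_subsets: "finite (subsets D)" if "D \<in> \<B>" for D
    using fin blocks[OF that] by (simp add: subsets_def)
  have disjoint: "subsets D \<inter> subsets D' = {}" if "D \<in> \<B>" "D' \<in> \<B>" "D \<noteq> D'" for D D'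
  proof (rule ccontr)
    assume "subsets D \<inter> subsets D' \<noteq> {}"
    then obtain S where "S \<subseteq> D \<inter> D'" "card S = t" by (auto simp: subsets_def)
    then have "t \<le> card (D \<inter> D')" using fin blocks that by (metis card_mono inf.coboundedI1)
    then show False using small_meets[OF that] by simp
  qed
  have "card (\<Union>D\<in>\<B>. subsets D) = (\<Sum>D\<in>\<B>. card (subsets D))"
    using \<open>finite \<B>\<close> finite_subsets disjoint by (simp add: card_UN_disjoint)
  also have "\<dots> = card \<B> * (k choose t)"
    using blocks fin by (simp add: subsets_def n_subsets)
  also have "\<dots> = card (subsets V)" by (simp add: count subsets_def n_subsets assms(1))
  finally have "(\<Union>D\<in>\<B>. subsets D) = subsets V"
    using blocks assms(1) by (intro card_subset_eq) (auto simp: subsets_def)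
  moreover have "T \<in> subsets V" using assms(5,6) by (simp add: subsets_def)
  ultimately show ?thesis unfolding subsets_def by blast
qed

lemma golay_std_octad_through:
  assumes "T \<subseteq> {..<24}" "card T = 5"
  shows "\<exists>b. length b = 12 \<and> card (golay_word b) = 8 \<and> T \<subseteq> golay_word b"
proof -
  let ?B = "{b. length b = 12 \<and> card (golay_word b) = 8}"
  have finite_word: "finite (golay_word b)" for b using golay_word_subset finite_subset by blast
  have "inj_on golay_word ?B"
  proof (rule inj_onI, rule ccontr)
    fix b b' assume "b \<in> ?B" "b' \<in> ?B" "golay_word b = golay_word b'" "b \<noteq> b'"
    then show False using golay_word_distance[of b b'] by (simp add: symdiff_def)
  qed
  then have "card (golay_word ` ?B) = 759" using golay_word_counts(2) by (simp add: card_image)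
  moreover have "(8::nat) choose 5 = 56"
    using binomial_fact_lemma[of 5 8] by (simp add: fact_numeral)
  moreover have "card {..<24::nat} choose 5 = 42504"
    using binomial_fact_lemma[of 5 24] by (simp add: fact_numeral)
  moreover have "card (D \<inter> D') < 5"
    if DD': "D \<in> golay_word ` ?B" "D' \<in> golay_word ` ?B" "D \<noteq> D'" for D D'
  proof -
    obtain b b' where "D = golay_word b" "D' = golay_word b'" "b \<in> ?B" "b' \<in> ?B"
      using DD'(1,2) by blast
    moreover have "b \<noteq> b'" using DD'(3) calculation(1,2) by blast
    ultimately show ?thesis
      using card_symdiff[OF finite_word finite_word, of b b'] golay_word_distance[of b b'] by simp
  qed
  ultimately have "\<exists>D\<in>golay_word ` ?B. T \<subseteq> D"
    using assms golay_word_subset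
    by (intro subsets_covered_by_counting[where V = "{..<24}" and k = 8 and t = 5])
      (auto dest: subsetD[OF golay_word_subset])
  then show ?thesis by blast
qed

lemma golay_copy_empty:
  assumes "golay_copy Gc"
  shows "{} \<in> Gc"
proof -
  have "{} \<in> golay_std"
    unfolding golay_std_def by (rule CollectI, rule exI[of _ "{}"]) simp
  then show ?thesis using assms unfolding golay_copy_def by force
qed

lemma golay_copy_octad_through:
  assumes "golay_copy Gc" "S \<subseteq> Omega" "card S = 5"
  shows "\<exists>D\<in>Gc. card D = 8 \<and> S \<subseteq> D \<and> D \<subseteq> Omega"
proof -
  obtain \<pi> where \<pi>: "bij_betw \<pi> Omega Omega" "Gc = (\<lambda>D. \<pi> ` D) ` golay_std"
    using assms(1) unfolding golay_copy_def by blast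
  define \<pi>' where "\<pi>' = inv_into Omega \<pi>"
  have \<pi>': "bij_betw \<pi>' Omega Omega" unfolding \<pi>'_def using \<pi>(1) by (rule bij_betw_inv_into)
  have "\<pi>' ` S \<subseteq> {..<24}" "card (\<pi>' ` S) = 5"
    using assms(2,3) \<pi>' by (auto simp: Omega_def bij_betw_def card_image inj_on_subset)
  then obtain b where b: "length b = 12" "card (golay_word b) = 8" "\<pi>' ` S \<subseteq> golay_word b"
    using golay_std_octad_through by blast
  have word: "golay_word b \<subseteq> Omega" using golay_word_subset by (simp add: Omega_def)
  show ?thesis
  proof (intro bexI conjI)
    show "\<pi> ` golay_word b \<in> Gc" using \<pi>(2) golay_word_in_std[OF b(1)] by blast
    show "card (\<pi> ` golay_word b) = 8" using b(2) word \<pi>(1)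
      by (metis bij_betw_def card_image inj_on_subset)
    show "S \<subseteq> \<pi> ` golay_word b"
    proof
      fix s assume "s \<in> S"
      then have "\<pi> (\<pi>' s) = s"
        using assms(2) bij_betw_inv_into_right[OF \<pi>(1)] unfolding \<pi>'_def by blast
      moreover have "\<pi>' s \<in> golay_word b" using b(3) \<open>s \<in> S\<close> by blast
      ultimately show "s \<in> \<pi> ` golay_word b" by (metis imageI)
    qed
    show "\<pi> ` golay_word b \<subseteq> Omega" using word \<pi>(1) by (auto simp: bij_betw_def)
  qed
qed

section \<open>Commuting sextets\<close>

lemma tetrad_in_own_sextet: "golay_copy Gc \<Longrightarrow> X \<subseteq> Omega \<Longrightarrow> card X = 4 \<Longrightarrow> X \<in> sextet Gc X"
  by (simp add: sextet_def golay_copy_empty)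

lemma octad_diff_in_sextet:
  assumes "D \<in> Gc" "D \<subseteq> Omega" "card D = 8" "X \<subseteq> D" "card X = 4"
  shows "D - X \<in> sextet Gc X"
proof -
  have "symdiff (D - X) X = D" using assms(4) by (auto simp: symdiff_def)
  moreover have "card (D - X) = 4"
    using assms finite_subset_Omega by (simp add: card_Diff_subset finite_subset)
  ultimately show ?thesis using assms(1,2) by (auto simp: sextet_def)
qed

lemma card_Int_tetrads:
  assumes "finite A" "finite T" "card A = 4" "card T = 4" "A \<noteq> T"
    and "even (card (A \<inter> T))" "A \<inter> T \<noteq> {}"
  shows "card (A \<inter> T) = 2"
proof -
  have "card (A \<inter> T) \<le> 4" using assms(1,3) by (metis Int_lower1 card_mono)
  moreover have "card (A \<inter> T) \<noteq> 4"
    using assms(1-5) by (metis Int_lower1 Int_lower2 card_subset_eq)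
  moreover have "card (A \<inter> T) \<noteq> 0" using assms(1,7) by simp
  ultimately show ?thesis using assms(6) by presburger
qed

lemma sextet_member_meeting_in_pair:
  assumes "golay_copy Gc" "balanced_commuting_four_group Gc A B C"
  shows "\<exists>B'\<in>sextet Gc B. card (A \<inter> B') = 2"
proof -
  have A: "A \<subseteq> Omega" "card A = 4" and B: "B \<subseteq> Omega" "card B = 4"
    and AB: "symdiff A B \<notin> Gc" and commute: "sextets_commute Gc A B"
    using assms(2) unfolding balanced_commuting_four_group_def by auto
  have "A \<in> sextet Gc A" "B \<in> sextet Gc B" using assms(1) A B by (simp_all add: tetrad_in_own_sextet)
  then have even: "even (card (A \<inter> T))" if "T \<in> sextet Gc B" for T
    using commute that unfolding sextets_commute_def by blast
  show ?thesis
  proof (cases "A \<inter> B = {}")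
    case False
    have "A \<noteq> B" using AB assms(1) by (auto simp: golay_copy_empty)
    then show ?thesis
      using False A B even \<open>B \<in> sextet Gc B\<close> finite_subset_Omega by (metis card_Int_tetrads)
  next
    case True
    obtain a where a: "a \<in> A" using A(2) by fastforce
    moreover have "a \<notin> B" using a True by blast
    moreover have "finite B" using B(1) by (rule finite_subset_Omega)
    ultimately have "card (insert a B) = 5" "insert a B \<subseteq> Omega"
      using A B by auto
    then obtain D where D: "D \<in> Gc" "card D = 8" "insert a B \<subseteq> D" "D \<subseteq> Omega"
      using golay_copy_octad_through[OF assms(1)] by blast
    then have B': "D - B \<in> sextet Gc B" using B(2) by (intro octad_diff_in_sextet) auto
    have "symdiff A B \<noteq> D" using AB D(1) by blast
    then have "A \<noteq> D - B" using D(3) by (auto simp: symdiff_def)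
    moreover have "a \<in> A \<inter> (D - B)" using a True D(3) by auto
    ultimately have "card (A \<inter> (D - B)) = 2"
      using A even[OF B'] B' finite_subset_Omega by (intro card_Int_tetrads) (auto simp: sextet_def)
    then show ?thesis using B' by blast
  qed
qed

lemma tetrads_in_common_octad:
  assumes "golay_copy Gc" "A \<subseteq> Omega" "card A = 4" "sextets_commute Gc A B"
    and B': "B' \<in> sextet Gc B" "card (A \<inter> B') = 2"
  shows "\<exists>D\<in>Gc. D \<subseteq> Omega \<and> card D = 8 \<and> A \<union> B' \<subseteq> D"
proof -
  have "B' \<subseteq> Omega" "card B' = 4" using B'(1) by (auto simp: sextet_def)
  then have fin: "finite A" "finite B'" using assms(2) finite_subset_Omega by auto
  have "card B' = card (B' \<inter> A) + card (B' - A)" using fin(2) by (rule card_Int_Diff)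
  then have card_B'_A: "card (B' - A) = 2" using \<open>card B' = 4\<close> B'(2) by (simp add: Int_commute)
  then obtain m where m: "m \<in> B' - A" by (metis card_2_iff insertI1)
  then have "card (insert m A) = 5" "insert m A \<subseteq> Omega"
    using fin(1) assms(2,3) \<open>B' \<subseteq> Omega\<close> by auto
  then obtain D where D: "D \<in> Gc" "card D = 8" "insert m A \<subseteq> D" "D \<subseteq> Omega"
    using golay_copy_octad_through[OF assms(1)] by blast
  (* The tetrad D - A of the sextet of A meets B' evenly, hence in both points of B' - A. *)
  then have "D - A \<in> sextet Gc A" using assms(3) by (intro octad_diff_in_sextet) auto
  then have "even (card ((D - A) \<inter> B'))" using assms(4) B'(1) unfolding sextets_commute_def by blast
  moreover have sub: "(D - A) \<inter> B' \<subseteq> B' - A" by blast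
  moreover have "m \<in> (D - A) \<inter> B'" using m D(3) by blast
  moreover have "card ((D - A) \<inter> B') \<le> 2"
    using card_mono[OF finite_Diff[OF fin(2)] sub] card_B'_A by simp
  moreover have "card ((D - A) \<inter> B') \<noteq> 0" using \<open>m \<in> (D - A) \<inter> B'\<close> fin(2) by auto
  ultimately have "card ((D - A) \<inter> B') = 2" by presburger
  then have "(D - A) \<inter> B' = B' - A" using sub card_B'_A fin(2) by (metis card_subset_eq finite_Diff)
  then have "A \<union> B' \<subseteq> D" using D(3) by blast
  then show ?thesis using D by blast
qed

lemma octad_split_pairs:
  assumes "finite D" "card D = 8" "A \<union> B \<subseteq> D" "card A = 4" "card B = 4" "card (A \<inter> B) = 2"
  shows "\<exists>i1 j1 i2 j2 i3 j3 i4 j4. distinct [i1, j1, i2, j2, i3, j3, i4, j4] \<and>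
    D = {i1, j1, i2, j2, i3, j3, i4, j4} \<and> A = {i1, j1, i2, j2} \<and> B = {i1, j1, i3, j3}"
proof -
  have fin: "finite A" "finite B" using assms(1,3) by (auto intro: finite_subset)
  have "card (A - B) = 2" using card_Int_Diff[OF fin(1), of B] assms(4,6) by simp
  then obtain i2 j2 where p2: "A - B = {i2, j2}" "i2 \<noteq> j2" by (metis card_2_iff)
  have "card (B - A) = 2" using card_Int_Diff[OF fin(2), of A] assms(5,6) by (simp add: Int_commute)
  then obtain i3 j3 where p3: "B - A = {i3, j3}" "i3 \<noteq> j3" by (metis card_2_iff)
  have "card (A \<union> B) = 6" using card_Un_Int[OF fin] assms(4-6) by simp
  then have "card (D - (A \<union> B)) = 2"
    using assms(2) card_Diff_subset[OF finite_subset[OF assms(3,1)] assms(3)] by simp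
  then obtain i4 j4 where p4: "D - (A \<union> B) = {i4, j4}" "i4 \<noteq> j4" by (metis card_2_iff)
  obtain i1 j1 where p1: "A \<inter> B = {i1, j1}" "i1 \<noteq> j1" using assms(6) by (metis card_2_iff)
  then have "i1 \<in> A" "i1 \<in> B" "j1 \<in> A" "j1 \<in> B" "i2 \<in> A" "i2 \<notin> B" "j2 \<in> A" "j2 \<notin> B"
    "i3 \<notin> A" "i3 \<in> B" "j3 \<notin> A" "j3 \<in> B" "i4 \<notin> A" "i4 \<notin> B" "j4 \<notin> A" "j4 \<notin> B"
    using p2(1) p3(1) p4(1) by blast+
  then have "distinct [i1, j1, i2, j2, i3, j3, i4, j4]" using p1(2) p2(2) p3(2) p4(2) by auto
  moreover have "D = (A \<inter> B) \<union> (A - B) \<union> (B - A) \<union> (D - (A \<union> B))" using assms(3) by blast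
  then have "D = {i1, j1, i2, j2, i3, j3, i4, j4}" unfolding p1(1) p2(1) p3(1) p4(1) by auto
  moreover have "A = {i1, j1, i2, j2}" "B = {i1, j1, i3, j3}" using p1(1) p2(1) p3(1) by blast+
  ultimately show ?thesis by (intro exI conjI) assumption+
qed

lemma commuting_tetrads_octad_frame:
  assumes "golay_copy Gc" "balanced_commuting_four_group Gc A B C"
  obtains B' i1 j1 i2 j2 i3 j3 i4 j4 where "B' \<in> sextet Gc B"
    "distinct [i1, j1, i2, j2, i3, j3, i4, j4]"
    "{i1, j1, i2, j2, i3, j3, i4, j4} \<subseteq> Omega" "{i1, j1, i2, j2, i3, j3, i4, j4} \<in> Gc"
    "A = {i1, j1, i2, j2}" "B' = {i1, j1, i3, j3}"
proof -
  have A: "A \<subseteq> Omega" "card A = 4" and commute: "sextets_commute Gc A B"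
    using assms(2) unfolding balanced_commuting_four_group_def by auto
  obtain B' where B': "B' \<in> sextet Gc B" "card (A \<inter> B') = 2"
    using sextet_member_meeting_in_pair[OF assms] by blast
  then obtain D where D: "D \<in> Gc" "D \<subseteq> Omega" "card D = 8" "A \<union> B' \<subseteq> D"
    using tetrads_in_common_octad[OF assms(1) A commute] by blast
  have "card B' = 4" using B'(1) by (simp add: sextet_def)
  then obtain i1 j1 i2 j2 i3 j3 i4 j4 where "distinct [i1, j1, i2, j2, i3, j3, i4, j4]"
    "D = {i1, j1, i2, j2, i3, j3, i4, j4}" "A = {i1, j1, i2, j2}" "B' = {i1, j1, i3, j3}"
    using octad_split_pairs[OF finite_subset_Omega[OF D(2)] D(3,4) A(2) _ B'(2)] by blast
  then show ?thesis using that B'(1) D(1,2) by blast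
qed

theorem lemma5p17:
  fixes Gc :: "nat set set" and G :: "cl set" and A B C :: "nat set"
    and \<mu> :: "nat set \<Rightarrow> real" and \<sigma> :: real
  assumes "golay_copy Gc"
    and "good_G Gc G"
    and "balanced_commuting_four_group Gc A B C"
    and "\<sigma> \<in> {1, -1}"
    and "cm_eq G (cl_mul (cl_e A) (cl_e B)) (cl_smul \<sigma> (cl_e C))"
    and "\<forall>X\<in>{{}, A, B, C}. \<mu> X \<in> {1, -1}"
    and "\<mu> {} = 1" and "\<mu> C = \<mu> A * \<mu> B"
  shows "in_spin_orbit G
           (cl_smul (1/2) (cl_add (cl_add (cl_add cl_one (cl_smul (\<mu> A) (cl_e A)))
              (cl_smul (\<mu> B) (cl_e B))) (cl_smul (- \<sigma> * \<mu> C) (cl_e C))))"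
proof -
  have A: "A \<subseteq> Omega" and B: "B \<subseteq> Omega" and C: "C \<subseteq> Omega"
    using assms(3) unfolding balanced_commuting_four_group_def by auto
  obtain B' i1 j1 i2 j2 i3 j3 i4 j4 where B': "B' \<in> sextet Gc B"
    and octad: "distinct [i1, j1, i2, j2, i3, j3, i4, j4]" "{i1, j1, i2, j2, i3, j3, i4, j4} \<subseteq> Omega"
      "{i1, j1, i2, j2, i3, j3, i4, j4} \<in> Gc"
    and AB': "A = {i1, j1, i2, j2}" "B' = {i1, j1, i3, j3}"
    using commuting_tetrads_octad_frame[OF assms(1,3)] .
  have "B' \<subseteq> Omega" "symdiff B B' \<in> Gc" using B' by (auto simp: sextet_def symdiff_commute)
  then obtain \<tau> where \<tau>: "\<tau> \<in> {1, -1}" "\<And>x. cm_equiv G (x * cl_basis B) (\<tau> *\<^sub>R (x * cl_basis B'))"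
    using cm_equiv_code_shift[OF assms(2) B] by blast
  obtain g where g: "Rep_clifford g \<in> Spin" "cm_equiv G g ((1/2) *\<^sub>R (1 + \<mu> A *\<^sub>R cl_basis A
      + (\<mu> B * \<tau>) *\<^sub>R cl_basis B' - (\<mu> A * (\<mu> B * \<tau>)) *\<^sub>R (cl_basis A * cl_basis B')))"
    using spin_orbit_octad[OF assms(2) octad, of "\<mu> A" "\<mu> B * \<tau>"] assms(6) \<tau>(1) unfolding AB' by auto
  have "cm_equiv G (cl_basis A * cl_basis B) (\<sigma> *\<^sub>R cl_basis C)"
    using assms(5) A B C
    by (simp add: cm_eq_Rep_iff[symmetric] times_clifford.rep_eq scaleR_clifford.rep_eq Rep_cl_basis)
  with \<tau>(2) have "cm_equiv G ((1/2) *\<^sub>R (1 + \<mu> A *\<^sub>R cl_basis A + \<mu> B *\<^sub>R cl_basis B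
      + (- \<sigma> * \<mu> C) *\<^sub>R cl_basis C)) ((1/2) *\<^sub>R (1 + \<mu> A *\<^sub>R cl_basis A + (\<mu> B * \<tau>) *\<^sub>R cl_basis B'
        - (\<mu> A * (\<mu> B * \<tau>)) *\<^sub>R (cl_basis A * cl_basis B')))"
    unfolding assms(8) by (rule cm_equiv_half_sum_shift)
  then have "in_spin_orbit G (Rep_clifford ((1/2) *\<^sub>R (1 + \<mu> A *\<^sub>R cl_basis A + \<mu> B *\<^sub>R cl_basis B
      + (- \<sigma> * \<mu> C) *\<^sub>R cl_basis C)))"
    by (rule in_spin_orbitI[OF g(1) cm_equiv_trans[OF g(2) cm_equiv_sym]])
  then show ?thesis
    using A B C by (simp only: scaleR_clifford.rep_eq plus_clifford.rep_eq one_clifford.rep_eq Rep_cl_basis)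
qed

end
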